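(* Let $f,g,h\in{\rm elh}(\mathbb{C})$. If $f\circ g=f\circ h$ and $g\not\equiv h$, then there exists an entire function $t(z)$ such that $g(z)=h(z)+e^{t(z)}$ for all $z\in\mathbb{C}$.
   Context: ${\rm elh}(\mathbb{C})$ denotes the set of entire functions with nowhere vanishing derivative and derivative $1$ at $0$. *)

theory Defs
  imports "HOL-Complex_Analysis.Complex_Analysis"
begin

definition elh :: "(complex \<Rightarrow> complex) set" where
  "elh = {f. f holomorphic_on UNIV \<and> (\<forall>z. deriv f z \<noteq> 0) \<and> deriv f 0 = 1}"

end

theory Submission
  imports Defs
begin

text \<open>Since \<open>f\<close> has nonvanishing derivative it is injective near every point, so
  \<open>f \<circ> g = f \<circ> h\<close> forces \<open>g = h\<close> near any point where \<open>g\<close> and \<open>h\<close> agree, and then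
  everywhere by analytic continuation. Hence \<open>g \<noteq> h\<close> means that \<open>g - h\<close> has no zeros,
  and a zero-free entire function has an entire logarithm.\<close>

lemma holomorphic_left_cancel_at_coincidence:
  assumes f: "f holomorphic_on UNIV" "deriv f (g z0) \<noteq> 0"
    and gh: "g holomorphic_on S" "h holomorphic_on S" "open S" "connected S"
    and eq_comp: "\<And>z. z \<in> S \<Longrightarrow> f (g z) = f (h z)"
    and z0: "z0 \<in> S" "g z0 = h z0"
    and z: "z \<in> S"
  shows "g z = h z"
proof -
  obtain r where r: "r > 0" "inj_on f (ball (g z0) r)"
    using has_complex_derivative_locally_injective[OF f(1) _ open_UNIV f(2)] by blast
  define T where "T = (S \<inter> g -` ball (g z0) r) \<inter> (S \<inter> h -` ball (g z0) r)"
  have "open T"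
    unfolding T_def
    using continuous_open_preimage[OF holomorphic_on_imp_continuous_on gh(3) open_ball] gh(1,2)
    by (metis open_Int)
  moreover have "z0 \<in> T"
    using r(1) z0 by (simp add: T_def)
  moreover have "g w = h w" if "w \<in> T" for w
    using r(2) eq_comp that unfolding T_def inj_on_def by blast
  moreover have "T \<subseteq> S"
    by (auto simp: T_def)
  ultimately show ?thesis
    using analytic_continuation_open[OF _ gh(3) _ gh(4) _ gh(1,2)] z by blast
qed

theorem proposition3p13:
  assumes "f \<in> elh" and "g \<in> elh" and "h \<in> elh"
    and "f \<circ> g = f \<circ> h" and "g \<noteq> h"
  shows "\<exists>t. t holomorphic_on UNIV \<and> (\<forall>z. g z = h z + exp (t z))"
proof -
  have f: "f holomorphic_on UNIV" "\<And>z. deriv f z \<noteq> 0"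
    and gh: "g holomorphic_on UNIV" "h holomorphic_on UNIV"
    using assms(1-3) by (auto simp: elh_def)
  have "g z \<noteq> h z" for z
  proof
    assume "g z = h z"
    then have "g w = h w" for w
      using holomorphic_left_cancel_at_coincidence[OF f(1) f(2) gh open_UNIV connected_UNIV]
        assms(4) by (metis UNIV_I comp_apply)
    with assms(5) show False by auto
  qed
  moreover have "(\<lambda>z. g z - h z) holomorphic_on UNIV"
    using gh by (intro holomorphic_intros)
  ultimately obtain t where "t holomorphic_on UNIV" "\<And>z. exp (t z) = g z - h z"
    using holomorphic_logarithm_exists[of UNIV "\<lambda>z. g z - h z" 0] by auto
  then show ?thesis by auto
qed

end
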